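(* Let $(\alpha_n)_{n\ge 0}$ be complex numbers with $|\alpha_n|<1$, and let $\Phi_n$, $\langle\cdot,\cdot\rangle$ and $\mu_{n,r,s}$ be as in the context. For all nonnegative integers $n,r,s$, the generalized moment $\mu_{n,r,s}$ is a polynomial with integer coefficients in $\{\alpha_j : 0\le j<n+r\}$ and $\{\overline{\alpha_j} : 0\le j<n+r\}$. Moreover, writing $\beta_j=-\overline{\alpha_j}$ for all $j$, $\mu_{n,r,s}$ can be written as a polynomial in the variables $\alpha_0,\alpha_1,\dots,\beta_0,\beta_1,\dots$ all of whose coefficients are positive integers, i.e. as an element of $\mathbb{Z}[\alpha_0,\alpha_1,\dots,\beta_0,\beta_1,\dots]$ with positive coefficients. Finally, the reciprocity \[ \mu_{-n,r,s}=\overline{\mu_{n,s,r}}\cdot\frac{\prod_{j=0}^{r-1}(1-|\alpha_j|^2)}{\prod_{j=0}^{s-1}(1-|\alpha_j|^2)} \] holds; in particular $\mu_{-n}=\overline{\mu_n}$.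
   Context: For a polynomial $f(z)=\sum_{k=0}^n a_kz^k$ of degree $n$, write $\overline{f}(z)=\sum_{k=0}^n\overline{a_k}z^k$ and $f^*(z)=z^n\overline{f}(1/z)$. Given complex numbers $\alpha_n$ with $|\alpha_n|<1$, define monic polynomials $\Phi_n$ with $\deg\Phi_n=n$ by $\Phi_0=1$ and $\Phi_{n+1}(z)=z\Phi_n(z)-\overline{\alpha_n}\,\Phi_n^*(z)$ (here $\Phi_n^*(z)=z^n\overline{\Phi_n}(1/z)$). Let $V$ be the space of Laurent polynomials in $z$ over $\mathbb{C}$, and let $\mathcal{L}$ be the unique linear functional on $V$ with $\mathcal{L}(1)=1$ and $\mathcal{L}(\Phi_m(z)\overline{\Phi_n}(1/z))=0$ for $m\ne n$ (for a Laurent polynomial $g$, $\overline{g}$ conjugates all coefficients). Define $\langle f,g\rangle=\mathcal{L}(f(z)\overline{g}(1/z))$ for $f,g\in V$; one has $\langle\Phi_s,\Phi_s\rangle=\prod_{j=0}^{s-1}(1-|\alpha_j|^2)$. For an integer $n$ and nonnegative integers $r,s$, the generalized moment is $\mu_{n,r,s}=\langle\Phi_s(z),z^n\Phi_r(z)\rangle/\langle\Phi_s(z),\Phi_s(z)\rangle$, and $\mu_n=\mu_{n,0,0}=\mathcal{L}(z^{-n})$. *)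

theory Defs
  imports Complex_Main "HOL-Computational_Algebra.Polynomial"
begin

text \<open>Reversed polynomial f^*(z) = z^(deg f) * conj-f(1/z).\<close>
definition pstar :: "complex poly \<Rightarrow> complex poly" where
  "pstar p = reflect_poly (map_poly cnj p)"

fun Phi :: "(nat \<Rightarrow> complex) \<Rightarrow> nat \<Rightarrow> complex poly" where
  "Phi \<alpha> 0 = 1"
| "Phi \<alpha> (Suc n) = pCons 0 (Phi \<alpha> n) - smult (cnj (\<alpha> n)) (pstar (Phi \<alpha> n))"

text \<open>A linear functional L on Laurent polynomials is determined by its values
  c k = L(z^k), k :: int.  For polynomials f, g and integer n,
  lpair c n f g = L( f(z) * conj(z^n g)(1/z) ) = <f, z^n g>.\<close>
definition lpair :: "(int \<Rightarrow> complex) \<Rightarrow> int \<Rightarrow> complex poly \<Rightarrow> complex poly \<Rightarrow> complex" where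
  "lpair c n f g = (\<Sum>i\<le>degree f. \<Sum>j\<le>degree g.
      coeff f i * cnj (coeff g j) * c (int i - int j - n))"

definition Lmom :: "(nat \<Rightarrow> complex) \<Rightarrow> int \<Rightarrow> complex" where
  "Lmom \<alpha> = (THE c. c 0 = 1 \<and>
      (\<forall>m n. m \<noteq> n \<longrightarrow> lpair c 0 (Phi \<alpha> m) (Phi \<alpha> n) = 0))"

definition gmom :: "(nat \<Rightarrow> complex) \<Rightarrow> int \<Rightarrow> nat \<Rightarrow> nat \<Rightarrow> complex" where
  "gmom \<alpha> n r s = lpair (Lmom \<alpha>) n (Phi \<alpha> s) (Phi \<alpha> r)
                   / lpair (Lmom \<alpha>) 0 (Phi \<alpha> s) (Phi \<alpha> s)"

end

theory Submission
  imports Defs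
begin

text \<open>
  The functional is computed explicitly: solving \<open>L(\<Phi>\<^sub>k) = 0\<close> recursively for \<open>L(z\<^sup>k)\<close> gives a
  Hermitian moment sequence, for which the Szego recursion yields \<open>L(z\<^sup>-\<^sup>j \<Phi>\<^sub>m) = 0\<close> for
  \<open>0 \<le> j < m\<close>; hence the \<open>\<Phi>\<^sub>m\<close> are orthogonal with
  \<open>\<langle>\<Phi>\<^sub>m, \<Phi>\<^sub>m\<rangle> = \<Prod>\<^sub>j\<^sub><\<^sub>m (1 - |\<alpha>\<^sub>j|\<^sup>2)\<close>.

  From \<open>z \<Phi>\<^sub>s = \<Phi>\<^sub>s\<^sub>+\<^sub>1 + cnj \<alpha>\<^sub>s \<Phi>\<^sub>s\<^sup>*\<close> and
  \<open>\<Phi>\<^sub>m\<^sub>+\<^sub>1\<^sup>* = (1 + \<alpha>\<^sub>m \<beta>\<^sub>m) \<Phi>\<^sub>m\<^sup>* - \<alpha>\<^sub>m \<Phi>\<^sub>m\<^sub>+\<^sub>1\<close>, induction on \<open>n\<close> writes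
  \<open>z\<^sup>n \<Phi>\<^sub>r = \<Sum>\<^sub>k\<^sub>\<le>\<^sub>n\<^sub>+\<^sub>r cnj(e\<^sub>k) \<Phi>\<^sub>k\<close> with every \<open>e\<^sub>k\<close> a polynomial with positive integer
  coefficients in the \<open>\<alpha>\<^sub>j, \<beta>\<^sub>j\<close> (\<open>j < n + r\<close>); by orthogonality \<open>\<mu>\<^sub>n\<^sub>,\<^sub>r\<^sub>,\<^sub>s = e\<^sub>s\<close>.
  Reciprocity is the Hermitian symmetry \<open>cnj \<langle>f, z\<^sup>n g\<rangle> = \<langle>g, z\<^sup>-\<^sup>n f\<rangle>\<close>.
\<close>

lemma sum_atMost_mono_neutral:
  fixes F :: "nat \<Rightarrow> 'b::comm_monoid_add"
  assumes "D \<le> A" "\<And>i. D < i \<Longrightarrow> F i = 0"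
  shows "(\<Sum>i\<le>A. F i) = (\<Sum>i\<le>D. F i)"
  by (rule sum.mono_neutral_right) (use assms in auto)

lemma smult_sum_right: "smult x (sum f A) = (\<Sum>s\<in>A. smult x (f s))"
  by (rule poly_eqI) (simp add: coeff_sum sum_distrib_left)

lemma pCons_0_sum: "pCons 0 (sum f A) = (\<Sum>s\<in>A. pCons 0 (f s))"
  by (rule poly_eqI) (simp add: coeff_sum coeff_pCons split: nat.split)

lemma coeff_pstar:
  "coeff (pstar p) i = (if i \<le> degree p then cnj (coeff p (degree p - i)) else 0)"
  by (simp add: pstar_def coeff_reflect_poly coeff_map_poly degree_map_poly)

lemma degree_pstar_le: "degree (pstar p) \<le> degree p"
  unfolding pstar_def using degree_reflect_poly_le[of "map_poly cnj p"] by (simp add: degree_map_poly)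

lemma pstar_1 [simp]: "pstar 1 = 1"
  by (simp add: pstar_def)

lemma degree_Phi_and_monic: "degree (Phi a m) = m \<and> coeff (Phi a m) m = 1"
proof (induction m)
  case 0
  then show ?case by simp
next
  case (Suc m)
  have deg_pstar: "degree (pstar (Phi a m)) \<le> m"
    using degree_pstar_le[of "Phi a m"] Suc by simp
  have lead: "coeff (Phi a (Suc m)) (Suc m) = 1"
    using Suc deg_pstar by (simp add: coeff_eq_0)
  have "degree (Phi a (Suc m)) \<le> Suc m"
    using deg_pstar Suc
    by (auto simp: degree_pCons_eq_if intro!: degree_diff_le le_trans[OF degree_smult_le])
  moreover have "Suc m \<le> degree (Phi a (Suc m))"
    using lead by (intro le_degree) simp
  ultimately have "degree (Phi a (Suc m)) = Suc m"
    by (rule antisym)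
  with lead show ?case
    by blast
qed

lemma degree_Phi [simp]: "degree (Phi a m) = m"
  and coeff_Phi_degree [simp]: "coeff (Phi a m) m = 1"
  using degree_Phi_and_monic by auto

lemmas Phi_Suc = Phi.simps(2)

declare Phi.simps(2) [simp del]

lemma coeff_Phi_Suc:
  "coeff (Phi a (Suc m)) k = (if k = 0 then 0 else coeff (Phi a m) (k - 1))
     - cnj (a m) * (if k \<le> m then cnj (coeff (Phi a m) (m - k)) else 0)"
  by (simp add: Phi_Suc coeff_pstar coeff_pCons split: nat.split)

lemma pstar_Phi_Suc:
  "pstar (Phi a (Suc m)) = pstar (Phi a m) - smult (a m) (pCons 0 (Phi a m))"
proof (rule poly_eqI)
  fix i
  have high: "coeff (Phi a m) k = 0" if "m < k" for k
    using that by (simp add: coeff_eq_0)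
  show "coeff (pstar (Phi a (Suc m))) i = coeff (pstar (Phi a m) - smult (a m) (pCons 0 (Phi a m))) i"
    unfolding coeff_pstar[of "Phi a (Suc m)"] degree_Phi coeff_Phi_Suc
    by (cases "i \<le> m"; cases "i = Suc m"; cases i)
       (auto simp: coeff_pstar coeff_pCons Suc_diff_le high split: nat.split)
qed

lemma pstar_Phi_Suc':
  "pstar (Phi a (Suc m)) =
     smult (1 - a m * cnj (a m)) (pstar (Phi a m)) + smult (- a m) (Phi a (Suc m))"
proof -
  have "pCons 0 (Phi a m) = Phi a (Suc m) + smult (cnj (a m)) (pstar (Phi a m))"
    by (simp add: Phi_Suc)
  then show ?thesis
    by (simp add: pstar_Phi_Suc smult_add_right smult_diff_left)
qed

subsection \<open>Moment functionals\<close>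

text \<open>\<open>lfun c j f\<close> is \<open>L(z\<^sup>-\<^sup>j f)\<close>, where \<open>c k = L(z\<^sup>k)\<close>.\<close>

definition lfun :: "(int \<Rightarrow> complex) \<Rightarrow> int \<Rightarrow> complex poly \<Rightarrow> complex" where
  "lfun c j f = lpair c j f 1"

definition hermitian :: "(int \<Rightarrow> complex) \<Rightarrow> bool" where
  "hermitian c \<longleftrightarrow> (\<forall>x. c (- x) = cnj (c x))"

lemma lfun_eq: "lfun c j f = (\<Sum>i\<le>degree f. coeff f i * c (int i - j))"
  by (simp add: lfun_def lpair_def)

lemma lfun_eq_sum_upto:
  assumes "degree f \<le> A"
  shows "lfun c j f = (\<Sum>i\<le>A. coeff f i * c (int i - j))"
  unfolding lfun_eq using assms by (intro sum_atMost_mono_neutral[symmetric]) (auto simp: coeff_eq_0)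

lemma lfun_add: "lfun c j (f + g) = lfun c j f + lfun c j g"
proof -
  let ?A = "max (degree f) (degree g)"
  have "degree (f + g) \<le> ?A"
    by (rule degree_add_le_max)
  then show ?thesis
    by (simp add: lfun_eq_sum_upto[of _ ?A] distrib_right sum.distrib)
qed

lemma lfun_diff: "lfun c j (f - g) = lfun c j f - lfun c j g"
proof -
  let ?A = "max (degree f) (degree g)"
  have "degree (f - g) \<le> ?A"
    by (rule degree_diff_le_max)
  then show ?thesis
    by (simp add: lfun_eq_sum_upto[of _ ?A] left_diff_distrib sum_subtractf)
qed

lemma lfun_smult: "lfun c j (smult x f) = x * lfun c j f"
  using degree_smult_le[of x f]
  by (simp add: lfun_eq_sum_upto[of _ "degree f"] sum_distrib_left mult.assoc)

lemma lfun_pCons_0: "lfun c j (pCons 0 f) = lfun c (j - 1) f"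
proof -
  have "lfun c j (pCons 0 f) = (\<Sum>i\<le>Suc (degree f). coeff (pCons 0 f) i * c (int i - j))"
    by (rule lfun_eq_sum_upto) (simp add: degree_pCons_le)
  also have "\<dots> = lfun c (j - 1) f"
    by (subst sum.atMost_Suc_shift) (simp add: lfun_eq algebra_simps)
  finally show ?thesis .
qed

lemma lfun_pstar:
  assumes "hermitian c"
  shows "lfun c j (pstar f) = cnj (lfun c (int (degree f) - j) f)"
proof -
  let ?D = "degree f"
  have "lfun c j (pstar f) = (\<Sum>i\<le>?D. coeff (pstar f) i * c (int i - j))"
    by (rule lfun_eq_sum_upto) (rule degree_pstar_le)
  also have "\<dots> = (\<Sum>i\<le>?D. coeff (pstar f) (?D - i) * c (int (?D - i) - j))"
    using sum.atLeastAtMost_rev[of "\<lambda>i. coeff (pstar f) i * c (int i - j)" 0 ?D]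
    by (simp only: atLeast0AtMost add_0_right)
  also have "\<dots> = (\<Sum>i\<le>?D. cnj (coeff f i * c (int i - (int ?D - j))))"
  proof (rule sum.cong)
    fix i
    assume "i \<in> {..?D}"
    then have "int (?D - i) - j = - (int i - (int ?D - j))"
      by (simp add: of_nat_diff)
    then have "c (int (?D - i) - j) = cnj (c (int i - (int ?D - j)))"
      using assms unfolding hermitian_def by metis
    then show "coeff (pstar f) (?D - i) * c (int (?D - i) - j) = cnj (coeff f i * c (int i - (int ?D - j)))"
      using \<open>i \<in> {..?D}\<close> by (simp add: coeff_pstar)
  qed simp
  also have "\<dots> = cnj (lfun c (int ?D - j) f)"
    by (simp add: lfun_eq)
  finally show ?thesis .
qed

lemma lpair_eq_sum_lfun:
  assumes "degree g \<le> B"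
  shows "lpair c n f g = (\<Sum>k\<le>B. cnj (coeff g k) * lfun c (n + int k) f)"
proof -
  have "lpair c n f g = (\<Sum>i\<le>degree f. \<Sum>k\<le>B. coeff f i * cnj (coeff g k) * c (int i - int k - n))"
    unfolding lpair_def
    by (intro sum.cong refl sum_atMost_mono_neutral[symmetric] assms) (auto simp: coeff_eq_0)
  also have "\<dots> = (\<Sum>k\<le>B. cnj (coeff g k) * lfun c (n + int k) f)"
    by (subst sum.swap) (simp add: lfun_eq sum_distrib_left algebra_simps)
  finally show ?thesis .
qed

lemma lpair_add_right: "lpair c n f (g + h) = lpair c n f g + lpair c n f h"
proof -
  let ?B = "max (degree g) (degree h)"
  have "degree (g + h) \<le> ?B"
    by (rule degree_add_le_max)
  then show ?thesis
    by (simp add: lpair_eq_sum_lfun[of _ ?B] distrib_right sum.distrib)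
qed

lemma lpair_smult_right: "lpair c n f (smult x g) = cnj x * lpair c n f g"
  using degree_smult_le[of x g]
  by (simp add: lpair_eq_sum_lfun[of _ "degree g"] sum_distrib_left mult.assoc)

lemma lpair_sum_smult_right:
  "lpair c n f (\<Sum>k\<le>(K::nat). smult (e k) (g k)) = (\<Sum>k\<le>K. cnj (e k) * lpair c n f (g k))"
  by (induction K) (simp_all add: lpair_add_right lpair_smult_right)

lemma lpair_pCons_0_right: "lpair c n f (pCons 0 g) = lpair c (n + 1) f g"
proof -
  have "lpair c n f (pCons 0 g) =
      (\<Sum>k\<le>Suc (degree g). cnj (coeff (pCons 0 g) k) * lfun c (n + int k) f)"
    by (rule lpair_eq_sum_lfun) (simp add: degree_pCons_le)
  also have "\<dots> = lpair c (n + 1) f g"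
    by (subst sum.atMost_Suc_shift) (simp add: lpair_eq_sum_lfun[of g "degree g"] algebra_simps)
  finally show ?thesis .
qed

lemma lpair_shift: "lpair c (int n) f g = lpair c 0 f ((pCons 0 ^^ n) g)"
proof (induction n arbitrary: g)
  case 0
  then show ?case by simp
next
  case (Suc n)
  have "(pCons 0 ^^ Suc n) g = (pCons 0 ^^ n) (pCons 0 g)"
    by (simp add: funpow_swap1)
  then show ?case
    using Suc[of "pCons 0 g"] by (simp add: lpair_pCons_0_right add.commute)
qed

lemma cnj_lpair:
  assumes "hermitian c"
  shows "cnj (lpair c n f g) = lpair c (- n) g f"
proof -
  have "cnj (lpair c n f g) =
      (\<Sum>i\<le>degree f. \<Sum>j\<le>degree g. cnj (coeff f i) * coeff g j * c (int j - int i - (- n)))"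
    unfolding lpair_def using assms unfolding hermitian_def
    by (auto intro!: sum.cong simp: algebra_simps) (metis minus_diff_eq)
  also have "\<dots> = lpair c (- n) g f"
    unfolding lpair_def by (subst sum.swap) (auto intro!: sum.cong simp: algebra_simps)
  finally show ?thesis .
qed

subsection \<open>The orthogonality functional\<close>

text \<open>Solving \<open>L(\<Phi>\<^sub>k) = 0\<close> for \<open>L(z\<^sup>k)\<close>, using that \<open>\<Phi>\<^sub>k\<close> is monic.\<close>

fun szego_moment :: "(nat \<Rightarrow> complex) \<Rightarrow> nat \<Rightarrow> complex" where
  "szego_moment a 0 = 1"
| "szego_moment a (Suc k) = - (\<Sum>i<Suc k. coeff (Phi a (Suc k)) i * szego_moment a i)"

definition moment_seq :: "(nat \<Rightarrow> complex) \<Rightarrow> int \<Rightarrow> complex" where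
  "moment_seq a x = (if 0 \<le> x then szego_moment a (nat x) else cnj (szego_moment a (nat (- x))))"

lemma hermitian_moment_seq: "hermitian (moment_seq a)"
  unfolding hermitian_def moment_seq_def by auto

lemma moment_seq_of_nat [simp]: "moment_seq a (int k) = szego_moment a k"
  by (simp add: moment_seq_def)

lemma lfun_0_eq: "lfun c 0 (Phi a k) = (\<Sum>i<k. coeff (Phi a k) i * c (int i)) + c (int k)"
  by (simp add: lfun_eq lessThan_Suc_atMost[symmetric])

lemma lfun_moment_seq_Phi:
  "0 \<le> j \<Longrightarrow> j < int m \<Longrightarrow> lfun (moment_seq a) j (Phi a m) = 0"
proof (induction m arbitrary: j)
  case 0
  then show ?case by simp
next
  case (Suc m)
  show ?case
  proof (cases "j = 0")
    case True
    have "lfun (moment_seq a) 0 (Phi a (Suc m)) =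
        (\<Sum>i<Suc m. coeff (Phi a (Suc m)) i * szego_moment a i) + szego_moment a (Suc m)"
      by (simp only: lfun_0_eq moment_seq_of_nat)
    also have "\<dots> = 0"
      by simp
    finally show ?thesis
      using True by simp
  next
    case False
    have "lfun (moment_seq a) j (Phi a (Suc m)) =
        lfun (moment_seq a) (j - 1) (Phi a m) - cnj (a m) * cnj (lfun (moment_seq a) (int m - j) (Phi a m))"
      by (simp add: Phi_Suc lfun_diff lfun_smult lfun_pCons_0 lfun_pstar[OF hermitian_moment_seq])
    also have "\<dots> = 0"
      using Suc False by simp
    finally show ?thesis .
  qed
qed

lemma lpair_Phi_below:
  assumes "\<And>j. 0 \<le> j \<Longrightarrow> j < int m \<Longrightarrow> lfun c j (Phi a m) = 0" "n < m"
  shows "lpair c 0 (Phi a m) (Phi a n) = 0"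
  using assms by (simp add: lpair_eq_sum_lfun[of _ n])

lemma lpair_moment_seq_Phi:
  assumes "m \<noteq> n"
  shows "lpair (moment_seq a) 0 (Phi a m) (Phi a n) = 0"
proof (cases "n < m")
  case True
  then show ?thesis
    using lpair_Phi_below[OF lfun_moment_seq_Phi] by blast
next
  case False
  with assms have "lpair (moment_seq a) 0 (Phi a n) (Phi a m) = 0"
    using lpair_Phi_below[OF lfun_moment_seq_Phi] by simp
  then show ?thesis
    using cnj_lpair[OF hermitian_moment_seq, of a 0 "Phi a n" "Phi a m"] by simp
qed

lemma orthogonality_determines_moments:
  assumes "c 0 = 1" and orth: "\<forall>m n. m \<noteq> n \<longrightarrow> lpair c 0 (Phi a m) (Phi a n) = 0"
  shows "c (int k) = szego_moment a k \<and> c (- int k) = cnj (szego_moment a k)"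
proof (induction k rule: less_induct)
  case (less k)
  show ?case
  proof (cases k)
    case 0
    then show ?thesis
      using \<open>c 0 = 1\<close> by simp
  next
    case (Suc k')
    have "lpair c 0 (Phi a k) (Phi a 0) = 0" "lpair c 0 (Phi a 0) (Phi a k) = 0"
      using orth Suc by blast+
    then have "0 = lfun c 0 (Phi a k)"
      by (simp add: lfun_def)
    also have "\<dots> = (\<Sum>i<k. coeff (Phi a k) i * szego_moment a i) + c (int k)"
      using less by (simp add: lfun_0_eq)
    finally have "c (int k) = - (\<Sum>i<k. coeff (Phi a k) i * szego_moment a i)"
      by (simp add: eq_neg_iff_add_eq_0 add.commute)
    then have pos: "c (int k) = szego_moment a k"
      using Suc by (simp del: sum.lessThan_Suc)
    have "0 = lpair c 0 1 (Phi a k)"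
      using \<open>lpair c 0 (Phi a 0) (Phi a k) = 0\<close> by simp
    also have "\<dots> = (\<Sum>i<k. cnj (coeff (Phi a k) i * szego_moment a i)) + c (- int k)"
      using less by (simp add: lpair_def lessThan_Suc_atMost[symmetric])
    finally have "c (- int k) = - (\<Sum>i<k. cnj (coeff (Phi a k) i * szego_moment a i))"
      by (simp add: eq_neg_iff_add_eq_0 add.commute)
    then have neg: "c (- int k) = cnj (szego_moment a k)"
      using Suc by (simp del: sum.lessThan_Suc)
    from pos neg show ?thesis ..
  qed
qed

lemma Lmom_eq_moment_seq: "Lmom a = moment_seq a"
  unfolding Lmom_def
proof (rule the_equality)
  show "moment_seq a 0 = 1 \<and> (\<forall>m n. m \<noteq> n \<longrightarrow> lpair (moment_seq a) 0 (Phi a m) (Phi a n) = 0)"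
    using lpair_moment_seq_Phi by (simp add: moment_seq_def)
next
  fix c
  assume "c 0 = 1 \<and> (\<forall>m n. m \<noteq> n \<longrightarrow> lpair c 0 (Phi a m) (Phi a n) = 0)"
  then have "c (int k) = moment_seq a (int k) \<and> c (- int k) = moment_seq a (- int k)" for k
    using orthogonality_determines_moments[of c a k] by (simp add: moment_seq_def)
  then show "c = moment_seq a"
    by (metis ext int_cases2)
qed

lemma hermitian_Lmom: "hermitian (Lmom a)"
  by (simp add: Lmom_eq_moment_seq hermitian_moment_seq)

lemma lfun_Lmom_Phi: "0 \<le> j \<Longrightarrow> j < int m \<Longrightarrow> lfun (Lmom a) j (Phi a m) = 0"
  by (simp add: Lmom_eq_moment_seq lfun_moment_seq_Phi)

lemma lpair_Lmom_Phi_orth: "m \<noteq> n \<Longrightarrow> lpair (Lmom a) 0 (Phi a m) (Phi a n) = 0"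
  by (simp add: Lmom_eq_moment_seq lpair_moment_seq_Phi)

definition Phi_normsq :: "(nat \<Rightarrow> complex) \<Rightarrow> nat \<Rightarrow> complex" where
  "Phi_normsq a m = (\<Prod>j<m. complex_of_real (1 - (cmod (a j))\<^sup>2))"

lemma cnj_Phi_normsq [simp]: "cnj (Phi_normsq a m) = Phi_normsq a m"
  by (simp add: Phi_normsq_def)

lemma Phi_normsq_Suc: "Phi_normsq a (Suc m) = Phi_normsq a m * (1 - a m * cnj (a m))"
  using complex_norm_square[of "a m"] by (simp add: Phi_normsq_def)

lemma Phi_normsq_nonzero:
  assumes "\<forall>j. cmod (a j) < 1"
  shows "Phi_normsq a m \<noteq> 0"
proof -
  have "(\<Prod>j<m. 1 - (cmod (a j))\<^sup>2) > 0"
    using assms by (intro prod_pos) (simp add: abs_square_less_1)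
  then show ?thesis
    unfolding Phi_normsq_def of_real_prod[symmetric] of_real_eq_0_iff by linarith
qed

lemma lfun_Lmom_Phi_degree: "lfun (Lmom a) (int m) (Phi a m) = Phi_normsq a m"
proof (induction m)
  case 0
  then show ?case
    by (simp add: lfun_eq Phi_normsq_def Lmom_eq_moment_seq moment_seq_def)
next
  case (Suc m)
  have shift: "pCons 0 (Phi a m) = Phi a (Suc m) + smult (cnj (a m)) (pstar (Phi a m))"
    by (simp add: Phi_Suc)
  have "lfun (Lmom a) (-1) (Phi a m) = lfun (Lmom a) 0 (pCons 0 (Phi a m))"
    by (simp add: lfun_pCons_0)
  also have "\<dots> = lfun (Lmom a) 0 (Phi a (Suc m)) + cnj (a m) * cnj (lfun (Lmom a) (int m) (Phi a m))"
    by (simp only: shift lfun_add lfun_smult lfun_pstar[OF hermitian_Lmom] degree_Phi diff_0_right)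
  also have "\<dots> = cnj (a m) * Phi_normsq a m"
    using Suc lfun_Lmom_Phi[of 0 "Suc m" a] by simp
  finally have below: "lfun (Lmom a) (-1) (Phi a m) = cnj (a m) * Phi_normsq a m" .
  have "lfun (Lmom a) (int (Suc m)) (Phi a (Suc m)) =
      lfun (Lmom a) (int m) (Phi a m) - cnj (a m) * cnj (lfun (Lmom a) (-1) (Phi a m))"
    by (simp add: Phi_Suc lfun_diff lfun_smult lfun_pCons_0 lfun_pstar[OF hermitian_Lmom])
  also have "\<dots> = Phi_normsq a (Suc m)"
    using Suc below by (simp add: Phi_normsq_Suc algebra_simps)
  finally show ?case .
qed

lemma lpair_Lmom_Phi:
  "lpair (Lmom a) 0 (Phi a s) (Phi a k) = (if s = k then Phi_normsq a s else 0)"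
proof (cases "s = k")
  case True
  have "lpair (Lmom a) 0 (Phi a s) (Phi a s) = (\<Sum>k\<le>s. cnj (coeff (Phi a s) k) * lfun (Lmom a) (int k) (Phi a s))"
    by (simp add: lpair_eq_sum_lfun[of _ s])
  also have "\<dots> = Phi_normsq a s"
    by (simp add: lessThan_Suc_atMost[symmetric] lfun_Lmom_Phi lfun_Lmom_Phi_degree)
  finally show ?thesis
    using True by simp
qed (simp add: lpair_Lmom_Phi_orth)

subsection \<open>Polynomials with positive coefficients in \<open>\<alpha>\<^sub>j\<close> and \<open>\<beta>\<^sub>j = - cnj \<alpha>\<^sub>j\<close>\<close>

type_synonym ab_exponent = "(nat \<Rightarrow> nat) \<times> (nat \<Rightarrow> nat)"

definition ab_monomial :: "nat \<Rightarrow> ab_exponent \<Rightarrow> (nat \<Rightarrow> complex) \<Rightarrow> complex" where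
  "ab_monomial N m a = (\<Prod>j<N. a j ^ fst m j * (- cnj (a j)) ^ snd m j)"

definition positive_ab_poly :: "nat \<Rightarrow> ((nat \<Rightarrow> complex) \<Rightarrow> complex) \<Rightarrow> bool" where
  "positive_ab_poly N f \<longleftrightarrow> (\<exists>M (c :: ab_exponent \<Rightarrow> nat).
      finite M \<and> (\<forall>m\<in>M. c m > 0) \<and> (\<forall>a. f a = (\<Sum>m\<in>M. of_nat (c m) * ab_monomial N m a)))"

lemma ab_monomial_mult:
  "ab_monomial N p a * ab_monomial N q a =
     ab_monomial N (\<lambda>j. fst p j + fst q j, \<lambda>j. snd p j + snd q j) a"
  unfolding ab_monomial_def by (simp add: power_add prod.distrib[symmetric] algebra_simps)

lemma ab_monomial_eq_signed:
  "ab_monomial N m a =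
     (-1) ^ (\<Sum>j<N. snd m j) * (\<Prod>j<N. a j ^ fst m j * cnj (a j) ^ snd m j)"
  unfolding ab_monomial_def power_minus[of "cnj _"]
  by (simp add: prod.distrib power_sum algebra_simps)

lemma positive_ab_poly_single: "positive_ab_poly N (ab_monomial N m)"
  unfolding positive_ab_poly_def by (intro exI[of _ "{m}"] exI[of _ "\<lambda>_. 1"]) simp

lemma positive_ab_poly_0: "positive_ab_poly N (\<lambda>a. 0)"
  unfolding positive_ab_poly_def by (intro exI[of _ "{}"]) simp

lemma ab_monomial_1: "ab_monomial N (\<lambda>_. 0, \<lambda>_. 0) = (\<lambda>a. 1)"
  by (simp add: ab_monomial_def fun_eq_iff)

lemma ab_monomial_alpha:
  assumes "j < N"
  shows "ab_monomial N (\<lambda>i. if i = j then 1 else 0, \<lambda>_. 0) = (\<lambda>a. a j)"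
proof
  fix a
  have "ab_monomial N (\<lambda>i. if i = j then 1 else 0, \<lambda>_. 0) a = (\<Prod>i<N. if i = j then a i else 1)"
    unfolding ab_monomial_def by (rule prod.cong) auto
  then show "ab_monomial N (\<lambda>i. if i = j then 1 else 0, \<lambda>_. 0) a = a j"
    using assms by simp
qed

lemma ab_monomial_beta:
  assumes "j < N"
  shows "ab_monomial N (\<lambda>_. 0, \<lambda>i. if i = j then 1 else 0) = (\<lambda>a. - cnj (a j))"
proof
  fix a
  have "ab_monomial N (\<lambda>_. 0, \<lambda>i. if i = j then 1 else 0) a = (\<Prod>i<N. if i = j then - cnj (a i) else 1)"
    unfolding ab_monomial_def by (rule prod.cong) auto
  then show "ab_monomial N (\<lambda>_. 0, \<lambda>i. if i = j then 1 else 0) a = - cnj (a j)"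
    using assms by simp
qed

lemma positive_ab_poly_1: "positive_ab_poly N (\<lambda>a. 1)"
  using positive_ab_poly_single[of N] ab_monomial_1 by metis

lemma positive_ab_poly_alpha: "j < N \<Longrightarrow> positive_ab_poly N (\<lambda>a. a j)"
  using positive_ab_poly_single[of N] ab_monomial_alpha by metis

lemma positive_ab_poly_beta: "j < N \<Longrightarrow> positive_ab_poly N (\<lambda>a. - cnj (a j))"
  using positive_ab_poly_single[of N] ab_monomial_beta by metis

lemma positive_ab_poly_reindex:
  fixes h :: "'i \<Rightarrow> ab_exponent"
  assumes "finite I" "\<forall>i\<in>I. w i > 0"
  shows "positive_ab_poly N (\<lambda>a. \<Sum>i\<in>I. of_nat (w i) * ab_monomial N (h i) a)"
proof -
  define c where "c m = (\<Sum>i\<in>{i\<in>I. h i = m}. w i)" for m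
  have "(\<Sum>i\<in>I. of_nat (w i) * ab_monomial N (h i) a) = (\<Sum>m\<in>h ` I. of_nat (c m) * ab_monomial N m a)" for a
  proof -
    have "(\<Sum>i\<in>I. of_nat (w i) * ab_monomial N (h i) a) =
        (\<Sum>m\<in>h ` I. \<Sum>i\<in>{i\<in>I. h i = m}. of_nat (w i) * ab_monomial N (h i) a)"
      by (rule sum.image_gen[OF assms(1)])
    also have "\<dots> = (\<Sum>m\<in>h ` I. of_nat (c m) * ab_monomial N m a)"
      unfolding c_def of_nat_sum sum_distrib_right by (intro sum.cong refl) auto
    finally show ?thesis .
  qed
  moreover have "c m > 0" if m: "m \<in> h ` I" for m
  proof -
    obtain i where i: "i \<in> I" "h i = m"
      using m by blast
    have "0 < w i"
      using i assms(2) by blast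
    also have "\<dots> \<le> c m"
      unfolding c_def by (rule member_le_sum) (use i assms(1) in simp_all)
    finally show ?thesis .
  qed
  moreover have "finite (h ` I)"
    using assms(1) by simp
  ultimately show ?thesis
    unfolding positive_ab_poly_def by (intro exI[of _ "h ` I"] exI[of _ c]) auto
qed

lemma positive_ab_poly_add:
  assumes "positive_ab_poly N f" "positive_ab_poly N g"
  shows "positive_ab_poly N (\<lambda>a. f a + g a)"
proof -
  obtain M1 c1 where M1: "finite M1" "\<forall>m\<in>M1. c1 m > 0"
    and f: "\<And>a. f a = (\<Sum>m\<in>M1. of_nat (c1 m) * ab_monomial N m a)"
    using assms(1) unfolding positive_ab_poly_def by blast
  obtain M2 c2 where M2: "finite M2" "\<forall>m\<in>M2. c2 m > 0"
    and g: "\<And>a. g a = (\<Sum>m\<in>M2. of_nat (c2 m) * ab_monomial N m a)"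
    using assms(2) unfolding positive_ab_poly_def by blast
  have "f a + g a =
      (\<Sum>i\<in>M1 <+> M2. of_nat (case_sum c1 c2 i) * ab_monomial N (case_sum id id i) a)" for a
    using M1 M2 by (simp add: f g sum.Plus comp_def)
  moreover have "positive_ab_poly N (\<lambda>a.
      \<Sum>i\<in>M1 <+> M2. of_nat (case_sum c1 c2 i) * ab_monomial N (case_sum id id i) a)"
    using M1 M2 by (intro positive_ab_poly_reindex) auto
  ultimately show ?thesis
    by simp
qed

lemma positive_ab_poly_mult:
  assumes "positive_ab_poly N f" "positive_ab_poly N g"
  shows "positive_ab_poly N (\<lambda>a. f a * g a)"
proof -
  obtain M1 c1 where M1: "finite M1" "\<forall>m\<in>M1. c1 m > 0"
    and f: "\<And>a. f a = (\<Sum>m\<in>M1. of_nat (c1 m) * ab_monomial N m a)"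
    using assms(1) unfolding positive_ab_poly_def by blast
  obtain M2 c2 where M2: "finite M2" "\<forall>m\<in>M2. c2 m > 0"
    and g: "\<And>a. g a = (\<Sum>m\<in>M2. of_nat (c2 m) * ab_monomial N m a)"
    using assms(2) unfolding positive_ab_poly_def by blast
  define h :: "ab_exponent \<times> ab_exponent \<Rightarrow> ab_exponent"
    where "h x = (\<lambda>j. fst (fst x) j + fst (snd x) j, \<lambda>j. snd (fst x) j + snd (snd x) j)" for x
  have "f a * g a = (\<Sum>x\<in>M1 \<times> M2. of_nat (c1 (fst x) * c2 (snd x)) * ab_monomial N (h x) a)" for a
    by (simp add: f g sum_product sum.cartesian_product case_prod_beta h_def ab_monomial_mult[symmetric] mult_ac)
  moreover have "positive_ab_poly N (\<lambda>a.
      \<Sum>x\<in>M1 \<times> M2. of_nat (c1 (fst x) * c2 (snd x)) * ab_monomial N (h x) a)"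
    using M1 M2 by (intro positive_ab_poly_reindex) auto
  ultimately show ?thesis
    by simp
qed

subsection \<open>Expansions in the orthogonal basis\<close>

text \<open>The coefficients are conjugated because \<open>\<langle>\<Phi>\<^sub>s, p\<rangle>\<close> is conjugate-linear in \<open>p\<close>.\<close>

definition pos_Phi_expansion :: "nat \<Rightarrow> nat \<Rightarrow> ((nat \<Rightarrow> complex) \<Rightarrow> complex poly) \<Rightarrow> bool" where
  "pos_Phi_expansion N K p \<longleftrightarrow> (\<exists>e. (\<forall>s. positive_ab_poly N (e s)) \<and>
      (\<forall>a. p a = (\<Sum>s\<le>K. smult (cnj (e s a)) (Phi a s))))"

lemma pos_Phi_expansion_Phi:
  assumes "s \<le> K"
  shows "pos_Phi_expansion N K (\<lambda>a. Phi a s)"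
  unfolding pos_Phi_expansion_def
proof (intro exI[of _ "\<lambda>k a. if k = s then 1 else 0"] conjI allI)
  fix k
  show "positive_ab_poly N (\<lambda>a. if k = s then 1 else 0)"
    by (simp add: positive_ab_poly_0 positive_ab_poly_1)
next
  fix a
  have "(\<Sum>k\<le>K. smult (cnj (if k = s then 1 else 0)) (Phi a k)) = (\<Sum>k\<le>K. if k = s then Phi a k else 0)"
    by (rule sum.cong) auto
  then show "Phi a s = (\<Sum>k\<le>K. smult (cnj (if k = s then 1 else 0)) (Phi a k))"
    using assms by simp
qed

lemma pos_Phi_expansion_add:
  assumes "pos_Phi_expansion N K p" "pos_Phi_expansion N K q"
  shows "pos_Phi_expansion N K (\<lambda>a. p a + q a)"
proof -
  obtain e1 where e1: "\<forall>s. positive_ab_poly N (e1 s)" "\<forall>a. p a = (\<Sum>s\<le>K. smult (cnj (e1 s a)) (Phi a s))"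
    using assms(1) unfolding pos_Phi_expansion_def by blast
  obtain e2 where e2: "\<forall>s. positive_ab_poly N (e2 s)" "\<forall>a. q a = (\<Sum>s\<le>K. smult (cnj (e2 s a)) (Phi a s))"
    using assms(2) unfolding pos_Phi_expansion_def by blast
  show ?thesis
    unfolding pos_Phi_expansion_def
    using e1 e2 positive_ab_poly_add
    by (intro exI[of _ "\<lambda>s a. e1 s a + e2 s a"]) (simp add: smult_add_left sum.distrib)
qed

lemma pos_Phi_expansion_smult:
  assumes "positive_ab_poly N f" "pos_Phi_expansion N K p"
  shows "pos_Phi_expansion N K (\<lambda>a. smult (cnj (f a)) (p a))"
proof -
  obtain e where e: "\<forall>s. positive_ab_poly N (e s)" "\<forall>a. p a = (\<Sum>s\<le>K. smult (cnj (e s a)) (Phi a s))"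
    using assms(2) unfolding pos_Phi_expansion_def by blast
  show ?thesis
    unfolding pos_Phi_expansion_def
    using e positive_ab_poly_mult[OF assms(1)]
    by (intro exI[of _ "\<lambda>s a. f a * e s a"]) (simp add: smult_sum_right)
qed

lemma pos_Phi_expansion_mono:
  assumes "K \<le> K'" "pos_Phi_expansion N K p"
  shows "pos_Phi_expansion N K' p"
proof -
  obtain e where e: "\<forall>s. positive_ab_poly N (e s)" "\<forall>a. p a = (\<Sum>s\<le>K. smult (cnj (e s a)) (Phi a s))"
    using assms(2) unfolding pos_Phi_expansion_def by blast
  let ?e = "\<lambda>s a. if s \<le> K then e s a else 0"
  have "p a = (\<Sum>s\<le>K'. smult (cnj (?e s a)) (Phi a s))" for a
    using e(2) by (subst sum_atMost_mono_neutral[OF assms(1)]) auto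
  moreover have "positive_ab_poly N (?e s)" for s
    using e(1) by (cases "s \<le> K") (simp_all add: positive_ab_poly_0)
  ultimately show ?thesis
    unfolding pos_Phi_expansion_def by (intro exI[of _ ?e]) blast
qed

lemma pos_Phi_expansion_sum:
  assumes "\<And>s. s \<le> K \<Longrightarrow> pos_Phi_expansion N K' (q s)"
  shows "pos_Phi_expansion N K' (\<lambda>a. \<Sum>s\<le>(K::nat). q s a)"
  using assms by (induction K) (simp_all add: pos_Phi_expansion_add)

lemma pos_Phi_expansion_pstar_Phi:
  "m \<le> N \<Longrightarrow> pos_Phi_expansion N m (\<lambda>a. pstar (Phi a m))"
proof (induction m)
  case 0
  then show ?case
    using pos_Phi_expansion_Phi[of 0 0 N] by simp
next
  case (Suc m)
  have "positive_ab_poly N (\<lambda>a. 1 + a m * - cnj (a m))"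
    using Suc.prems
    by (intro positive_ab_poly_add positive_ab_poly_mult positive_ab_poly_1
        positive_ab_poly_alpha positive_ab_poly_beta) auto
  moreover have "positive_ab_poly N (\<lambda>a. - cnj (a m))"
    using Suc.prems by (intro positive_ab_poly_beta) auto
  ultimately have "pos_Phi_expansion N (Suc m) (\<lambda>a.
      smult (cnj (1 + a m * - cnj (a m))) (pstar (Phi a m)) + smult (cnj (- cnj (a m))) (Phi a (Suc m)))"
    using Suc
    by (intro pos_Phi_expansion_add pos_Phi_expansion_smult pos_Phi_expansion_Phi
        pos_Phi_expansion_mono[of m "Suc m"]) auto
  then show ?case
    by (simp add: pstar_Phi_Suc' mult.commute)
qed

lemma pos_Phi_expansion_pCons_0_Phi:
  assumes "s < N"
  shows "pos_Phi_expansion N (Suc s) (\<lambda>a. pCons 0 (Phi a s))"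
proof -
  have "pos_Phi_expansion N (Suc s) (\<lambda>a. Phi a (Suc s) + smult (cnj (a s)) (pstar (Phi a s)))"
    using assms
    by (intro pos_Phi_expansion_add pos_Phi_expansion_smult pos_Phi_expansion_Phi positive_ab_poly_alpha
        pos_Phi_expansion_mono[of s "Suc s"] pos_Phi_expansion_pstar_Phi) auto
  then show ?thesis
    by (simp add: Phi_Suc)
qed

lemma pos_Phi_expansion_pCons_0:
  assumes "pos_Phi_expansion N K p" "K < N"
  shows "pos_Phi_expansion N (Suc K) (\<lambda>a. pCons 0 (p a))"
proof -
  obtain e where e: "\<forall>s. positive_ab_poly N (e s)" "\<forall>a. p a = (\<Sum>s\<le>K. smult (cnj (e s a)) (Phi a s))"
    using assms(1) unfolding pos_Phi_expansion_def by blast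
  have "pos_Phi_expansion N (Suc K) (\<lambda>a. smult (cnj (e s a)) (pCons 0 (Phi a s)))" if "s \<le> K" for s
    using that assms(2) e(1)
    by (intro pos_Phi_expansion_smult pos_Phi_expansion_mono[OF _ pos_Phi_expansion_pCons_0_Phi]) auto
  then have "pos_Phi_expansion N (Suc K) (\<lambda>a. \<Sum>s\<le>K. smult (cnj (e s a)) (pCons 0 (Phi a s)))"
    by (rule pos_Phi_expansion_sum)
  then show ?thesis
    using e(2) by (simp add: pCons_0_sum smult_pCons)
qed

lemma pos_Phi_expansion_shift:
  "n + r \<le> N \<Longrightarrow> pos_Phi_expansion N (n + r) (\<lambda>a. (pCons 0 ^^ n) (Phi a r))"
proof (induction n)
  case 0
  then show ?case
    by (simp add: pos_Phi_expansion_Phi)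
next
  case (Suc n)
  then show ?case
    using pos_Phi_expansion_pCons_0[of N "n + r"] by simp
qed

lemma gmom_positive_ab_poly:
  "\<exists>g. positive_ab_poly (n + r) g \<and> (\<forall>a. (\<forall>j. cmod (a j) < 1) \<longrightarrow> gmom a (int n) r s = g a)"
proof -
  obtain e where e: "\<forall>k. positive_ab_poly (n + r) (e k)"
    and expansion: "\<And>a. (pCons 0 ^^ n) (Phi a r) = (\<Sum>k\<le>n + r. smult (cnj (e k a)) (Phi a k))"
    using pos_Phi_expansion_shift[of n r "n + r"] unfolding pos_Phi_expansion_def by auto
  let ?g = "if s \<le> n + r then e s else (\<lambda>a. 0)"
  have "gmom a (int n) r s = ?g a" if "\<forall>j. cmod (a j) < 1" for a
  proof -
    have "lpair (Lmom a) (int n) (Phi a s) (Phi a r) =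
        (\<Sum>k\<le>n + r. e k a * (if s = k then Phi_normsq a s else 0))"
      by (simp add: lpair_shift expansion lpair_sum_smult_right lpair_Lmom_Phi)
    also have "\<dots> = ?g a * Phi_normsq a s"
      by (simp add: if_distrib[of "\<lambda>x. _ * x"] cong: if_cong)
    finally show ?thesis
      using Phi_normsq_nonzero[OF that] by (simp add: gmom_def lpair_Lmom_Phi)
  qed
  moreover have "positive_ab_poly (n + r) ?g"
    using e by (simp add: positive_ab_poly_0)
  ultimately show ?thesis
    by blast
qed

lemma gmom_reciprocity:
  assumes "\<forall>j. cmod (a j) < 1"
  shows "gmom a (- n) r s = cnj (gmom a n s r) * Phi_normsq a r / Phi_normsq a s"
  using Phi_normsq_nonzero[OF assms, of r]
  by (simp add: gmom_def lpair_Lmom_Phi cnj_lpair[OF hermitian_Lmom])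

theorem theorem3p2:
  fixes n r s :: nat
  shows
    "(\<exists>(M :: ((nat \<Rightarrow> nat) \<times> (nat \<Rightarrow> nat)) set) (c :: (nat \<Rightarrow> nat) \<times> (nat \<Rightarrow> nat) \<Rightarrow> int).
        finite M \<and>
        (\<forall>\<alpha> :: nat \<Rightarrow> complex. (\<forall>j. cmod (\<alpha> j) < 1) \<longrightarrow>
           gmom \<alpha> (int n) r s =
             (\<Sum>m\<in>M. of_int (c m) *
                (\<Prod>j<n + r. \<alpha> j ^ fst m j * cnj (\<alpha> j) ^ snd m j))))
   \<and> (\<exists>(N :: nat) (M :: ((nat \<Rightarrow> nat) \<times> (nat \<Rightarrow> nat)) set) (c :: (nat \<Rightarrow> nat) \<times> (nat \<Rightarrow> nat) \<Rightarrow> nat).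
        finite M \<and> (\<forall>m\<in>M. c m > 0) \<and>
        (\<forall>\<alpha> :: nat \<Rightarrow> complex. (\<forall>j. cmod (\<alpha> j) < 1) \<longrightarrow>
           gmom \<alpha> (int n) r s =
             (\<Sum>m\<in>M. of_nat (c m) *
                (\<Prod>j<N. \<alpha> j ^ fst m j * (- cnj (\<alpha> j)) ^ snd m j))))
   \<and> (\<forall>\<alpha> :: nat \<Rightarrow> complex. (\<forall>j. cmod (\<alpha> j) < 1) \<longrightarrow>
        gmom \<alpha> (- int n) r s =
          cnj (gmom \<alpha> (int n) s r) *
          (\<Prod>j<r. complex_of_real (1 - (cmod (\<alpha> j))\<^sup>2)) /
          (\<Prod>j<s. complex_of_real (1 - (cmod (\<alpha> j))\<^sup>2))
        \<and> gmom \<alpha> (- int n) 0 0 = cnj (gmom \<alpha> (int n) 0 0))"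
proof -
  obtain g where g: "positive_ab_poly (n + r) g"
    and gmom_g: "\<forall>a. (\<forall>j. cmod (a j) < 1) \<longrightarrow> gmom a (int n) r s = g a"
    using gmom_positive_ab_poly by blast
  obtain M c where positive: "finite M" "\<forall>m\<in>M. c m > 0"
    and g_eq: "\<And>a. g a = (\<Sum>m\<in>M. of_nat (c m) * ab_monomial (n + r) m a)"
    using g unfolding positive_ab_poly_def by blast
  define c' where "c' m = int (c m) * (-1) ^ (\<Sum>j<n + r. snd m j)" for m
  have g_eq_signed: "g a = (\<Sum>m\<in>M. of_int (c' m) * (\<Prod>j<n + r. a j ^ fst m j * cnj (a j) ^ snd m j))" for a
    by (simp add: g_eq c'_def ab_monomial_eq_signed mult.assoc)
  have "gmom a (- int n) 0 0 = cnj (gmom a (int n) 0 0)" if "\<forall>j. cmod (a j) < 1" for a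
    using gmom_reciprocity[OF that, of "int n" 0 0] by (simp add: Phi_normsq_def)
  then show ?thesis
    using gmom_g positive g_eq g_eq_signed gmom_reciprocity[unfolded Phi_normsq_def]
    by (intro conjI exI[of _ M] exI[of _ c'] exI[of _ "n + r"] exI[of _ c]) (auto simp: ab_monomial_def)
qed

end
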